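(* Let $T=(V,E)$ be a finite tree, $\delta\in(0,1)$, and let $\mathcal H=\{\{i,j\}:\{i,j\}\in E\}$. Then for every $i\in V$, $$\mu_i(V;r^{v^T}_{\mathcal H})=\sum_{\substack{\{p,q\}\subseteq V,\ p\neq q\\ i\text{ lies on the }T\text{-path from }p\text{ to }q}}\frac{2\,\delta^{t_{pq}(T)}}{t_{pq}(T)+1},$$ where $t_{pq}(T)$ is the distance between $p$ and $q$ in $T$ (and the endpoints $p,q$ count as lying on the path).
   Context: For a finite simple undirected graph $G=(V,E)$ and $\delta\in(0,1)$: for $S\subseteq V$, $G[S]$ is the induced subgraph and $t_{ij}(G[S])$ the shortest-path distance in $G[S]$ ($=\infty$ if $i,j$ are disconnected there), with $\delta^\infty:=0$. The distance-polynomial worth is $v^G(S):=\sum_{i\in S}\sum_{j\in S,\,j\neq i}\delta^{t_{ij}(G[S])}$. A conference structure is a family $\mathcal H$ of subsets of $V$ of size $\ge2$; for $C\subseteq V$, $C/\mathcal H$ is the partition of $C$ into classes of the relation "$i=j$, or there are $S_1,\dots,S_m\in\mathcal H$ all contained in $C$ with $i\in S_1$, $j\in S_m$, $S_k\cap S_{k+1}\neq\varnothing$". The restricted worth is $r^{v^G}_{\mathcal H}(C):=\sum_{B\in C/\mathcal H}v^G(B)$. For a TU game $u$ on a finite player set $N$, $\mu_i(N;u):=\sum_{S\subseteq N\setminus\{i\}}\frac{|S|!(|N|-|S|-1)!}{|N|!}\bigl(u(S\cup\{i\})-u(S)\bigr)$ (the Shapley value; applied to $r^{v^G}_{\mathcal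 H}$ it is the Myerson value). *)

theory Defs
  imports Main "HOL-Library.Extended_Nat"
begin

definition simple_graph :: "'a set \<Rightarrow> 'a set set \<Rightarrow> bool" where
  "simple_graph V E \<longleftrightarrow> finite V \<and>
     (\<forall>e\<in>E. \<exists>i j. e = {i, j} \<and> i \<noteq> j \<and> i \<in> V \<and> j \<in> V)"

definition walk_in :: "'a set set \<Rightarrow> 'a set \<Rightarrow> 'a list \<Rightarrow> bool" where
  "walk_in E S ps \<longleftrightarrow> ps \<noteq> [] \<and> set ps \<subseteq> S \<and>
     (\<forall>k. Suc k < length ps \<longrightarrow> {ps ! k, ps ! Suc k} \<in> E)"

text \<open>Shortest-path distance t_ij(G[S]) (infinity if disconnected).\<close>

definition gdist :: "'a set set \<Rightarrow> 'a set \<Rightarrow> 'a \<Rightarrow> 'a \<Rightarrow> enat" where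
  "gdist E S i j = (INF ps \<in> {ps. walk_in E S ps \<and> hd ps = i \<and> last ps = j}.
                      enat (length ps - 1))"

definition dpow :: "real \<Rightarrow> enat \<Rightarrow> real" where
  "dpow \<delta> t = (case t of enat n \<Rightarrow> \<delta> ^ n | \<infinity> \<Rightarrow> 0)"

definition dp_worth :: "real \<Rightarrow> 'a set set \<Rightarrow> 'a set \<Rightarrow> real" where
  "dp_worth \<delta> E S = (\<Sum>i\<in>S. \<Sum>j\<in>S - {i}. dpow \<delta> (gdist E S i j))"

definition connected_graph :: "'a set \<Rightarrow> 'a set set \<Rightarrow> bool" where
  "connected_graph V E \<longleftrightarrow>
     (\<forall>i\<in>V. \<forall>j\<in>V. \<exists>ps. walk_in E V ps \<and> hd ps = i \<and> last ps = j)"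

definition acyclic_graph :: "'a set \<Rightarrow> 'a set set \<Rightarrow> bool" where
  "acyclic_graph V E \<longleftrightarrow>
     \<not> (\<exists>ps. walk_in E V ps \<and> distinct ps \<and> length ps \<ge> 3 \<and> {last ps, hd ps} \<in> E)"

definition is_tree :: "'a set \<Rightarrow> 'a set set \<Rightarrow> bool" where
  "is_tree V E \<longleftrightarrow> simple_graph V E \<and> V \<noteq> {} \<and> connected_graph V E \<and> acyclic_graph V E"

definition on_path :: "'a set \<Rightarrow> 'a set set \<Rightarrow> 'a \<Rightarrow> 'a \<Rightarrow> 'a \<Rightarrow> bool" where
  "on_path V E p q i \<longleftrightarrow>
     (\<exists>ps. walk_in E V ps \<and> distinct ps \<and> hd ps = p \<and> last ps = q \<and> i \<in> set ps)"

definition conf_rel :: "'a set set \<Rightarrow> 'a set \<Rightarrow> 'a \<Rightarrow> 'a \<Rightarrow> bool" where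
  "conf_rel H C i j \<longleftrightarrow> i = j \<or>
     (\<exists>Ss. Ss \<noteq> [] \<and> (\<forall>S\<in>set Ss. S \<in> H \<and> S \<subseteq> C) \<and> i \<in> hd Ss \<and> j \<in> last Ss \<and>
           (\<forall>k. Suc k < length Ss \<longrightarrow> Ss ! k \<inter> Ss ! Suc k \<noteq> {}))"

definition conf_partition :: "'a set set \<Rightarrow> 'a set \<Rightarrow> 'a set set" where
  "conf_partition H C = (\<lambda>i. {j\<in>C. conf_rel H C i j}) ` C"

definition restricted_worth :: "('a set \<Rightarrow> real) \<Rightarrow> 'a set set \<Rightarrow> 'a set \<Rightarrow> real" where
  "restricted_worth v H C = (\<Sum>B\<in>conf_partition H C. v B)"

definition shapley :: "'a \<Rightarrow> 'a set \<Rightarrow> ('a set \<Rightarrow> real) \<Rightarrow> real" where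
  "shapley i N u = (\<Sum>S\<in>Pow (N - {i}).
      (fact (card S) * fact (card N - card S - 1) / fact (card N)) * (u (S \<union> {i}) - u S))"

definition fst_end :: "'a set \<Rightarrow> 'a" where
  "fst_end e = (SOME p. p \<in> e)"

definition snd_end :: "'a set \<Rightarrow> 'a" where
  "snd_end e = (SOME q. q \<in> e \<and> q \<noteq> fst_end e)"

end

theory Submission
  imports Defs
begin

text \<open>In a tree two vertices \<open>p \<noteq> q\<close> are connected inside a coalition \<open>C\<close> only
  through the unique tree path between them, and then at the tree distance \<open>t\<^sub>p\<^sub>q\<close>. Hence
  the worth of \<open>C\<close> restricted to its components is \<open>\<Sum> \<delta>\<^bsup>t\<^sub>p\<^sub>q\<^esup>\<close> over the ordered
  pairs whose whole path lies in \<open>C\<close>: the Myerson game is a combination of unanimity games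
  on the vertex sets of paths. By linearity of the Shapley value, and because a unanimity
  game on \<open>t\<^sub>p\<^sub>q + 1\<close> players gives each of them \<open>1 / (t\<^sub>p\<^sub>q + 1)\<close>, player \<open>i\<close> gets
  \<open>\<delta>\<^bsup>t\<^sub>p\<^sub>q\<^esup> / (t\<^sub>p\<^sub>q + 1)\<close> from each ordered pair whose path passes through \<open>i\<close>;
  each unordered pair is counted twice.\<close>

section \<open>Walks and paths\<close>

lemma walk_in_iff_successively:
  "walk_in E S ps \<longleftrightarrow> ps \<noteq> [] \<and> set ps \<subseteq> S \<and> successively (\<lambda>x y. {x, y} \<in> E) ps"
  unfolding walk_in_def successively_conv_nth by blast

lemma walk_in_rev: "walk_in E S ps \<Longrightarrow> walk_in E S (rev ps)"
  by (simp add: walk_in_iff_successively insert_commute)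

lemma walk_in_mono: "walk_in E S ps \<Longrightarrow> S \<subseteq> T \<Longrightarrow> walk_in E T ps"
  unfolding walk_in_def by blast

lemma walk_in_append_iff:
  "walk_in E S (xs @ x # ys) \<longleftrightarrow> walk_in E S (xs @ [x]) \<and> walk_in E S (x # ys)"
  by (auto simp: walk_in_iff_successively successively_append_iff)

lemma walk_in_shortcut:
  "walk_in E S ps \<Longrightarrow>
     \<exists>qs. walk_in E S qs \<and> distinct qs \<and> hd qs = hd ps \<and> last qs = last ps \<and> set qs \<subseteq> set ps"
proof (induction "length ps" arbitrary: ps rule: less_induct)
  case less
  show ?case
  proof (cases "distinct ps")
    case True
    then show ?thesis using less.prems by blast
  next
    case False
    then obtain xs a ys zs where ps: "ps = xs @ a # ys @ a # zs"
      using not_distinct_decomp by fastforce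
    let ?ps' = "xs @ a # zs"
    have "walk_in E S ?ps'"
      using less.prems walk_in_append_iff[of E S xs a "ys @ a # zs"]
        walk_in_append_iff[of E S "xs @ a # ys" a zs]
      by (simp add: ps walk_in_append_iff[of E S xs a zs])
    moreover have "length ?ps' < length ps" by (simp add: ps)
    ultimately obtain qs where "walk_in E S qs" "distinct qs" "hd qs = hd ?ps'"
      "last qs = last ?ps'" "set qs \<subseteq> set ?ps'"
      using less.hyps by blast
    moreover have "hd ?ps' = hd ps" "last ?ps' = last ps" "set ?ps' \<subseteq> set ps"
      by (auto simp: ps hd_append)
    ultimately show ?thesis by auto
  qed
qed

definition path_in :: "'a set set \<Rightarrow> 'a set \<Rightarrow> 'a \<Rightarrow> 'a \<Rightarrow> 'a list \<Rightarrow> bool" where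
  "path_in E S p q ps \<longleftrightarrow> walk_in E S ps \<and> distinct ps \<and> hd ps = p \<and> last ps = q"

lemma path_in_rev: "path_in E S p q ps \<Longrightarrow> path_in E S q p (rev ps)"
  by (simp add: path_in_def walk_in_rev hd_rev last_rev)

lemma path_in_split:
  "path_in E S p q (xs @ x # ys) \<Longrightarrow> path_in E S p x (xs @ [x]) \<and> path_in E S x q (x # ys)"
  unfolding path_in_def walk_in_append_iff[of E S xs x ys]
  by (cases xs) auto

lemma path_in_loop: "path_in E S p p ps \<Longrightarrow> ps = [p]"
  unfolding path_in_def walk_in_def by (cases ps) (auto split: if_splits)

lemma on_path_iff_path_in: "on_path V E p q i \<longleftrightarrow> (\<exists>ps. path_in E V p q ps \<and> i \<in> set ps)"
  unfolding on_path_def path_in_def by blast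

lemma on_path_commute: "on_path V E p q i \<Longrightarrow> on_path V E q p i"
  unfolding on_path_iff_path_in by (metis path_in_rev set_rev)

text \<open>Two internally disjoint paths with the same ends close up to a cycle.\<close>

lemma acyclic_internally_disjoint_paths_eq:
  assumes acyc: "acyclic_graph V E"
    and ps: "path_in E V p q ps" and qs: "path_in E V p q (p # qi @ [q])"
    and disj: "set ps \<inter> set qi = {}"
  shows "ps = p # qi @ [q]"
proof (rule ccontr)
  assume neq: "ps \<noteq> p # qi @ [q]"
  have pq: "p \<noteq> q" using qs by (simp add: path_in_def)
  have ps_len: "length ps \<ge> 2"
    using ps pq unfolding path_in_def walk_in_def
    by (cases ps) (auto simp: Suc_le_eq split: if_splits)
  have "successively (\<lambda>x y. {x, y} \<in> E) (p # qi @ [q])"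
    using qs unfolding path_in_def walk_in_iff_successively by blast
  then have qi_walk: "successively (\<lambda>x y. {x, y} \<in> E) qi"
    and qi_last: "qi \<noteq> [] \<Longrightarrow> {last qi, q} \<in> E"
    and pq_edge: "qi = [] \<Longrightarrow> {p, q} \<in> E"
    by (simp_all add: successively_Cons successively_append_iff)
  define cyc where "cyc = rev ps @ qi"
  have "walk_in E V cyc"
    using ps qs ps_len qi_walk
    by (cases qi) (auto simp: cyc_def path_in_def walk_in_iff_successively
        successively_append_iff hd_rev last_rev insert_commute)
  moreover have "distinct cyc"
    using ps qs disj by (auto simp: cyc_def path_in_def)
  moreover have "length cyc \<ge> 3"
  proof (cases qi)
    case Nil
    have "length ps \<noteq> 2"
      using ps neq Nil by (auto simp: path_in_def length_Suc_conv numeral_2_eq_2)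
    then show ?thesis using ps_len Nil by (simp add: cyc_def)
  next
    case Cons
    then show ?thesis using ps_len by (simp add: cyc_def)
  qed
  moreover have "{last cyc, hd cyc} \<in> E"
    using ps ps_len qi_last pq_edge
    by (cases "qi = []") (auto simp: cyc_def path_in_def hd_append hd_rev last_rev insert_commute)
  ultimately show False
    using acyc unfolding acyclic_graph_def by blast
qed

lemma acyclic_path_unique:
  assumes acyc: "acyclic_graph V E"
  shows "path_in E V p q ps \<Longrightarrow> path_in E V p q qs \<Longrightarrow> ps = qs"
proof (induction "length ps + length qs" arbitrary: p q ps qs rule: less_induct)
  case less
  show ?case
  proof (cases "\<exists>x \<in> set ps \<inter> set qs. x \<noteq> p \<and> x \<noteq> q")
    case True
    then obtain x pa pb qa qb where x: "x \<noteq> p" "x \<noteq> q"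
      and ps: "ps = pa @ x # pb" and qs: "qs = qa @ x # qb"
      by (metis IntE split_list)
    have ne: "pa \<noteq> []" "pb \<noteq> []" "qb \<noteq> []"
      using less.prems x by (auto simp: ps qs path_in_def)
    have p1: "path_in E V p x (pa @ [x])" "path_in E V x q (x # pb)"
      using path_in_split[OF less.prems(1)[unfolded ps]] by auto
    have p2: "path_in E V p x (qa @ [x])" "path_in E V x q (x # qb)"
      using path_in_split[OF less.prems(2)[unfolded qs]] by auto
    have "pa @ [x] = qa @ [x]"
      using less.hyps[OF _ p1(1) p2(1)] ne by (simp add: ps qs)
    moreover have "x # pb = x # qb"
      using less.hyps[OF _ p1(2) p2(2)] ne by (simp add: ps qs)
    ultimately show ?thesis by (simp add: ps qs)
  next
    case False
    show ?thesis
    proof (cases "p = q")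
      case True
      then show ?thesis using less.prems path_in_loop by metis
    next
      case pq: False
      then obtain qi where qs: "qs = p # qi @ [q]"
        using less.prems(2) unfolding path_in_def walk_in_def
        by (metis append_butlast_last_id hd_Cons_tl last_ConsL last_tl)
      have "set ps \<inter> set qi = {}"
        using False less.prems(2) by (auto simp: qs path_in_def)
      then show ?thesis
        using acyclic_internally_disjoint_paths_eq[OF acyc less.prems(1)] less.prems(2)
        by (simp add: qs)
    qed
  qed
qed

section \<open>Paths and distances in trees\<close>

lemma is_tree_finite: "is_tree V E \<Longrightarrow> finite V"
  by (simp add: is_tree_def simple_graph_def)

definition tree_path :: "'a set \<Rightarrow> 'a set set \<Rightarrow> 'a \<Rightarrow> 'a \<Rightarrow> 'a list" where
  "tree_path V E p q = (THE ps. path_in E V p q ps)"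

lemma connected_graph_path_in:
  assumes "connected_graph V E" "p \<in> V" "q \<in> V"
  obtains ps where "path_in E V p q ps"
  using assms walk_in_shortcut unfolding connected_graph_def path_in_def by metis

lemma tree_path_unique: "is_tree V E \<Longrightarrow> path_in E V p q ps \<Longrightarrow> tree_path V E p q = ps"
  unfolding tree_path_def is_tree_def using acyclic_path_unique by (metis the_equality)

lemma path_in_tree_path:
  assumes "is_tree V E" "p \<in> V" "q \<in> V"
  shows "path_in E V p q (tree_path V E p q)"
proof -
  obtain ps where "path_in E V p q ps"
    using assms connected_graph_path_in unfolding is_tree_def by metis
  then show ?thesis using tree_path_unique[OF assms(1)] by simp
qed

lemma on_path_iff_tree_path:
  "is_tree V E \<Longrightarrow> p \<in> V \<Longrightarrow> q \<in> V \<Longrightarrow> on_path V E p q i \<longleftrightarrow> i \<in> set (tree_path V E p q)"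
  by (metis on_path_iff_path_in path_in_tree_path tree_path_unique)

lemma tree_path_subset_walk:
  assumes "is_tree V E" "walk_in E V ws"
  shows "set (tree_path V E (hd ws) (last ws)) \<subseteq> set ws"
proof -
  obtain ps where "path_in E V (hd ws) (last ws) ps" "set ps \<subseteq> set ws"
    using walk_in_shortcut[OF assms(2)] unfolding path_in_def by blast
  then show ?thesis using tree_path_unique[OF assms(1)] by simp
qed

lemma ends_in_tree_path:
  assumes "is_tree V E" "p \<in> V" "q \<in> V"
  shows "p \<in> set (tree_path V E p q)" "q \<in> set (tree_path V E p q)"
  using path_in_tree_path[OF assms] unfolding path_in_def walk_in_def
  by (metis hd_in_set, metis last_in_set)

lemma gdist_tree:
  assumes T: "is_tree V E" and C: "C \<subseteq> V" and pq: "p \<in> V" "q \<in> V"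
  shows "gdist E C p q = (if set (tree_path V E p q) \<subseteq> C
            then enat (length (tree_path V E p q) - 1) else \<infinity>)"
proof -
  let ?W = "{ws. walk_in E C ws \<and> hd ws = p \<and> last ws = q}"
  let ?t = "tree_path V E p q"
  have t: "path_in E V p q ?t" using path_in_tree_path[OF T pq] .
  have t_sub: "set ?t \<subseteq> set ws" if "ws \<in> ?W" for ws
    using that tree_path_subset_walk[OF T] walk_in_mono[OF _ C] by blast
  show ?thesis
  proof (cases "set ?t \<subseteq> C")
    case True
    have "?t \<in> ?W" using t True unfolding path_in_def walk_in_def by auto
    moreover have "length ?t - 1 \<le> length ws - 1" if "ws \<in> ?W" for ws
    proof -
      have "length ?t = card (set ?t)" using t by (simp add: path_in_def distinct_card)
      also have "\<dots> \<le> card (set ws)" using t_sub[OF that] by (simp add: card_mono)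
      also have "\<dots> \<le> length ws" by (rule card_length)
      finally show ?thesis by (rule diff_le_mono)
    qed
    ultimately have "gdist E C p q = enat (length ?t - 1)"
      unfolding gdist_def by (intro antisym INF_lower INF_greatest) auto
    then show ?thesis using True by simp
  next
    case False
    have "?W = {}"
      using t_sub False by (force simp: walk_in_def)
    then have "gdist E C p q = \<infinity>"
      unfolding gdist_def by (simp only: INF_empty top_enat_def)
    then show ?thesis using False by simp
  qed
qed

lemma gdist_tree_eq_length:
  assumes "is_tree V E" "p \<in> V" "q \<in> V"
  shows "gdist E V p q = enat (length (tree_path V E p q) - 1)"
proof -
  have "set (tree_path V E p q) \<subseteq> V"
    using path_in_tree_path[OF assms] unfolding path_in_def walk_in_def by blast
  then show ?thesis using gdist_tree[OF assms(1) order_refl assms(2,3)] by simp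
qed

lemma gdist_commute: "gdist E S p q = gdist E S q p"
proof -
  have le: "gdist E S q p \<le> gdist E S p q" for p q
    unfolding gdist_def
  proof (rule INF_greatest)
    fix ws assume "ws \<in> {ws. walk_in E S ws \<and> hd ws = p \<and> last ws = q}"
    then have "rev ws \<in> {ws. walk_in E S ws \<and> hd ws = q \<and> last ws = p}"
      using walk_in_rev[of E S ws] by (simp add: hd_rev last_rev)
    then show "(INF ws\<in>{ws. walk_in E S ws \<and> hd ws = q \<and> last ws = p}. enat (length ws - 1))
        \<le> enat (length ws - 1)"
      by (rule INF_lower2) simp
  qed
  show ?thesis using le[of p q] le[of q p] by (rule antisym)
qed

definition unanimity_game :: "'a set \<Rightarrow> 'a set \<Rightarrow> real" where
  "unanimity_game T S = (if T \<subseteq> S then 1 else 0)"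

lemma dpow_gdist_tree:
  assumes "is_tree V E" "C \<subseteq> V" "p \<in> V" "q \<in> V"
  shows "dpow \<delta> (gdist E C p q)
           = dpow \<delta> (gdist E V p q) * unanimity_game (set (tree_path V E p q)) C"
  using gdist_tree[OF assms] gdist_tree_eq_length[OF assms(1,3,4)]
  by (simp add: unanimity_game_def dpow_def)

section \<open>Components of a coalition\<close>

lemma conf_rel_iff_successively:
  "conf_rel H C i j \<longleftrightarrow> i = j \<or>
     (\<exists>Ss. Ss \<noteq> [] \<and> (\<forall>S\<in>set Ss. S \<in> H \<and> S \<subseteq> C) \<and> i \<in> hd Ss \<and> j \<in> last Ss \<and>
           successively (\<lambda>A B. A \<inter> B \<noteq> {}) Ss)"
  unfolding conf_rel_def successively_conv_nth ..

lemma conf_rel_refl [simp]: "conf_rel H C i i"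
  by (simp add: conf_rel_def)

lemma conf_rel_commute: "conf_rel H C i j \<Longrightarrow> conf_rel H C j i"
  unfolding conf_rel_iff_successively
  by (elim disjE exE conjE, simp, intro disjI2 exI[where x = "rev _"])
    (auto simp: hd_rev last_rev Int_commute)

lemma conf_rel_trans: "conf_rel H C i j \<Longrightarrow> conf_rel H C j k \<Longrightarrow> conf_rel H C i k"
proof -
  assume ij: "conf_rel H C i j" and jk: "conf_rel H C j k"
  show ?thesis
  proof (cases "i = j \<or> j = k")
    case True
    then show ?thesis using ij jk by auto
  next
    case False
    then obtain Ss Ts where
      "Ss \<noteq> []" "\<forall>S\<in>set Ss. S \<in> H \<and> S \<subseteq> C" "i \<in> hd Ss" "j \<in> last Ss"
      "successively (\<lambda>A B. A \<inter> B \<noteq> {}) Ss"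
      "Ts \<noteq> []" "\<forall>S\<in>set Ts. S \<in> H \<and> S \<subseteq> C" "j \<in> hd Ts" "k \<in> last Ts"
      "successively (\<lambda>A B. A \<inter> B \<noteq> {}) Ts"
      using ij jk unfolding conf_rel_iff_successively by blast
    then show ?thesis
      unfolding conf_rel_iff_successively
      by (intro disjI2 exI[of _ "Ss @ Ts"]) (auto simp: successively_append_iff)
  qed
qed

lemma conf_rel_member: "S \<in> H \<Longrightarrow> S \<subseteq> C \<Longrightarrow> i \<in> S \<Longrightarrow> j \<in> S \<Longrightarrow> conf_rel H C i j"
  unfolding conf_rel_def by (intro disjI2 exI[of _ "[S]"]) auto

lemma conf_rel_walk_in: "walk_in E C ws \<Longrightarrow> x \<in> set ws \<Longrightarrow> conf_rel E C (hd ws) x"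
proof (induction ws rule: induct_list012)
  case (3 a b ws)
  then have ab: "conf_rel E C a b" and "walk_in E C (b # ws)"
    by (auto simp: walk_in_iff_successively intro: conf_rel_member)
  show ?case
  proof (cases "x = a")
    case False
    then have "conf_rel E C b x" using 3 \<open>walk_in E C (b # ws)\<close> by simp
    then show ?thesis using conf_rel_trans[OF ab] by simp
  qed simp
qed auto

definition conf_equiv :: "'a set set \<Rightarrow> 'a set \<Rightarrow> ('a \<times> 'a) set" where
  "conf_equiv H C = {(i, j). i \<in> C \<and> j \<in> C \<and> conf_rel H C i j}"

lemma equiv_conf_equiv: "equiv C (conf_equiv H C)"
proof (rule equivI)
  show "conf_equiv H C \<subseteq> C \<times> C" "refl_on C (conf_equiv H C)"
    by (auto simp: conf_equiv_def refl_on_def)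
  show "sym (conf_equiv H C)"
  proof (rule symI)
    fix x y assume "(x, y) \<in> conf_equiv H C"
    then show "(y, x) \<in> conf_equiv H C"
      using conf_rel_commute[of H C x y] by (simp add: conf_equiv_def)
  qed
  show "trans (conf_equiv H C)"
  proof (rule transI)
    fix x y z assume "(x, y) \<in> conf_equiv H C" "(y, z) \<in> conf_equiv H C"
    then show "(x, z) \<in> conf_equiv H C"
      using conf_rel_trans[of H C x y z] by (simp add: conf_equiv_def)
  qed
qed

lemma conf_partition_eq_quotient: "conf_partition H C = C // conf_equiv H C"
proof -
  have "C // conf_equiv H C = (\<lambda>i. conf_equiv H C `` {i}) ` C"
    unfolding quotient_def by blast
  also have "\<dots> = conf_partition H C"
    unfolding conf_partition_def conf_equiv_def by (intro image_cong refl) auto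
  finally show ?thesis ..
qed

lemma sum_quotient_unanimity_game:
  assumes R: "equiv C R" and "finite C" "T \<noteq> {}"
    and within_class: "T \<subseteq> C \<Longrightarrow> \<exists>B\<in>C//R. T \<subseteq> B"
  shows "(\<Sum>B\<in>C//R. unanimity_game T B) = unanimity_game T C"
proof (cases "T \<subseteq> C")
  case True
  then obtain B where B: "B \<in> C//R" "T \<subseteq> B" using within_class by blast
  have "finite (C//R)"
    using R \<open>finite C\<close> by (simp add: equiv_def finite_quotient)
  have "(\<Sum>B'\<in>C//R. unanimity_game T B') = (\<Sum>B'\<in>C//R. if B' = B then 1 else 0)"
  proof (rule sum.cong)
    fix B' assume "B' \<in> C//R"
    then show "unanimity_game T B' = (if B' = B then 1 else 0)"
      using quotient_disj[OF R _ B(1)] B \<open>T \<noteq> {}\<close> by (auto simp: unanimity_game_def)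
  qed simp
  also have "\<dots> = unanimity_game T C"
    using \<open>finite (C//R)\<close> B(1) True by (simp add: unanimity_game_def)
  finally show ?thesis .
next
  case False
  then have "unanimity_game T B = 0" if "B \<in> C//R" for B
    using in_quotient_imp_subset[OF R that] by (auto simp: unanimity_game_def)
  then show ?thesis
    using False by (simp add: unanimity_game_def)
qed

lemma tree_path_within_conf_class:
  assumes T: "is_tree V E" and "C \<subseteq> V" "p \<in> V" "q \<in> V"
    and sub: "set (tree_path V E p q) \<subseteq> C"
  shows "set (tree_path V E p q) \<subseteq> conf_equiv E C `` {p}"
proof -
  have "walk_in E C (tree_path V E p q)" "hd (tree_path V E p q) = p"
    using path_in_tree_path[OF T \<open>p \<in> V\<close> \<open>q \<in> V\<close>] sub by (auto simp: path_in_def walk_in_def)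
  then show ?thesis
    using sub ends_in_tree_path[OF T \<open>p \<in> V\<close> \<open>q \<in> V\<close>] conf_rel_walk_in
    by (fastforce simp: conf_equiv_def)
qed

lemma sum_offdiag:
  assumes "finite A"
  shows "(\<Sum>p\<in>A. \<Sum>q\<in>A - {p}. f p q) = (\<Sum>(p, q)\<in>A \<times> A - Id. f p q)"
proof -
  have "Sigma A (\<lambda>p. A - {p}) = A \<times> A - Id" by auto
  then show ?thesis using assms by (simp add: sum.Sigma)
qed

lemma dp_worth_tree:
  assumes T: "is_tree V E" and B: "B \<subseteq> V"
  shows "dp_worth \<delta> E B = (\<Sum>(p, q)\<in>V \<times> V - Id.
           dpow \<delta> (gdist E V p q) * unanimity_game (set (tree_path V E p q)) B)"
proof -
  have fin: "finite V" using T by (rule is_tree_finite)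
  have "dp_worth \<delta> E B = (\<Sum>(p, q)\<in>B \<times> B - Id. dpow \<delta> (gdist E B p q))"
    unfolding dp_worth_def using finite_subset[OF B fin] by (rule sum_offdiag)
  also have "\<dots> = (\<Sum>(p, q)\<in>B \<times> B - Id.
      dpow \<delta> (gdist E V p q) * unanimity_game (set (tree_path V E p q)) B)"
  proof (rule sum.cong[OF refl])
    fix x assume "x \<in> B \<times> B - Id"
    then obtain p q where "x = (p, q)" "p \<in> V" "q \<in> V" using B by auto
    then show "(case x of (p, q) \<Rightarrow> dpow \<delta> (gdist E B p q)) = (case x of (p, q) \<Rightarrow>
        dpow \<delta> (gdist E V p q) * unanimity_game (set (tree_path V E p q)) B)"
      using dpow_gdist_tree[OF T B] by simp
  qed
  also have "\<dots> = (\<Sum>(p, q)\<in>V \<times> V - Id.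
      dpow \<delta> (gdist E V p q) * unanimity_game (set (tree_path V E p q)) B)"
  proof (rule sum.mono_neutral_left)
    show "finite (V \<times> V - Id)" using fin by simp
    show "B \<times> B - Id \<subseteq> V \<times> V - Id" using B by auto
    show "\<forall>x\<in>V \<times> V - Id - (B \<times> B - Id). (case x of (p, q) \<Rightarrow>
        dpow \<delta> (gdist E V p q) * unanimity_game (set (tree_path V E p q)) B) = 0"
    proof
      fix x assume "x \<in> V \<times> V - Id - (B \<times> B - Id)"
      then obtain p q where x: "x = (p, q)" "p \<in> V" "q \<in> V" "p \<notin> B \<or> q \<notin> B"
        by auto
      then have "\<not> set (tree_path V E p q) \<subseteq> B"
        using ends_in_tree_path[OF T] by blast
      then show "(case x of (p, q) \<Rightarrow>
          dpow \<delta> (gdist E V p q) * unanimity_game (set (tree_path V E p q)) B) = 0"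
        by (simp add: x unanimity_game_def)
    qed
  qed
  finally show ?thesis .
qed

text \<open>Only pairs joined inside \<open>C\<close> contribute, and such a pair lies in a single
  component of \<open>C\<close>, whose worth counts it exactly once.\<close>

lemma restricted_worth_tree:
  assumes T: "is_tree V E" and C: "C \<subseteq> V"
  shows "restricted_worth (dp_worth \<delta> E) E C = (\<Sum>(p, q)\<in>V \<times> V - Id.
           dpow \<delta> (gdist E V p q) * unanimity_game (set (tree_path V E p q)) C)"
proof -
  let ?R = "conf_equiv E C"
  have R: "equiv C ?R" by (rule equiv_conf_equiv)
  have fin: "finite C" using is_tree_finite[OF T] C by (rule finite_subset[rotated])
  have "restricted_worth (dp_worth \<delta> E) E C = (\<Sum>B\<in>C//?R. dp_worth \<delta> E B)"
    by (simp add: restricted_worth_def conf_partition_eq_quotient)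
  also have "\<dots> = (\<Sum>B\<in>C//?R. \<Sum>(p, q)\<in>V \<times> V - Id.
      dpow \<delta> (gdist E V p q) * unanimity_game (set (tree_path V E p q)) B)"
  proof (rule sum.cong[OF refl])
    fix B assume "B \<in> C//?R"
    then have "B \<subseteq> V" using in_quotient_imp_subset[OF R] C by blast
    then show "dp_worth \<delta> E B = (\<Sum>(p, q)\<in>V \<times> V - Id.
        dpow \<delta> (gdist E V p q) * unanimity_game (set (tree_path V E p q)) B)"
      by (rule dp_worth_tree[OF T])
  qed
  also have "\<dots> = (\<Sum>(p, q)\<in>V \<times> V - Id.
      dpow \<delta> (gdist E V p q) * (\<Sum>B\<in>C//?R. unanimity_game (set (tree_path V E p q)) B))"
    unfolding sum_distrib_left case_prod_unfold by (rule sum.swap)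
  also have "\<dots> = (\<Sum>(p, q)\<in>V \<times> V - Id.
      dpow \<delta> (gdist E V p q) * unanimity_game (set (tree_path V E p q)) C)"
  proof (rule sum.cong[OF refl])
    fix x assume "x \<in> V \<times> V - Id"
    then obtain p q where x: "x = (p, q)" "p \<in> V" "q \<in> V" by auto
    let ?P = "set (tree_path V E p q)"
    have "\<exists>B\<in>C//?R. ?P \<subseteq> B" if "?P \<subseteq> C"
    proof
      show "?R `` {p} \<in> C//?R"
        using that ends_in_tree_path[OF T x(2,3)] by (blast intro: quotientI)
      show "?P \<subseteq> ?R `` {p}"
        using tree_path_within_conf_class[OF T C x(2,3) that] .
    qed
    moreover have "?P \<noteq> {}" using ends_in_tree_path[OF T x(2,3)] by auto
    ultimately show "(case x of (p, q) \<Rightarrow>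
        dpow \<delta> (gdist E V p q) * (\<Sum>B\<in>C//?R. unanimity_game (set (tree_path V E p q)) B))
      = (case x of (p, q) \<Rightarrow>
        dpow \<delta> (gdist E V p q) * unanimity_game (set (tree_path V E p q)) C)"
      using sum_quotient_unanimity_game[OF R fin] by (simp add: x)
  qed
  finally show ?thesis .
qed

section \<open>The Shapley value\<close>

lemma shapley_cong:
  assumes "i \<in> N" "\<And>S. S \<subseteq> N \<Longrightarrow> u S = u' S"
  shows "shapley i N u = shapley i N u'"
  unfolding shapley_def
proof (intro sum.cong refl)
  fix S assume "S \<in> Pow (N - {i})"
  then have "S \<subseteq> N" "S \<union> {i} \<subseteq> N" using assms(1) by auto
  then show "fact (card S) * fact (card N - card S - 1) / fact (card N) * (u (S \<union> {i}) - u S)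
      = fact (card S) * fact (card N - card S - 1) / fact (card N) * (u' (S \<union> {i}) - u' S)"
    using assms(2) by simp
qed

lemma shapley_sum:
  "shapley i N (\<lambda>S. \<Sum>x\<in>X. c x * u x S) = (\<Sum>x\<in>X. c x * shapley i N (u x))"
  unfolding shapley_def
  by (simp add: sum_distrib_left sum_subtractf[symmetric] algebra_simps
      sum.swap[of _ X])

text \<open>Grouping \<open>R\<close> by \<open>j = card R\<close> and dividing by \<open>k! m!\<close>, where \<open>m = card A\<close>, this is
  the hockey-stick identity \<open>\<Sum>j \<le> m. (k + j choose j) = (k + m + 1 choose m)\<close>.\<close>

lemma sum_Pow_fact_mult_fact:
  assumes "finite A"
  shows "(\<Sum>R\<in>Pow A. fact (k + card R) * fact (card A - card R) :: real)
           = fact (k + 1 + card A) / (k + 1)"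
  using assms
proof (induction A rule: finite_induct)
  case empty
  then show ?case by (simp add: field_simps)
next
  case (insert a A)
  let ?m = "card A"
  let ?g = "\<lambda>R. fact (k + card R) * fact (card (insert a A) - card R) :: real"
  have card_insert: "card (insert a A) = Suc ?m" using insert by simp
  have "sum ?g (Pow (insert a A)) = sum ?g (Pow A) + sum ?g (insert a ` Pow A)"
    unfolding Pow_insert using insert by (intro sum.union_disjoint) auto
  also have "sum ?g (insert a ` Pow A) = (\<Sum>R\<in>Pow A. ?g (insert a R))"
  proof (rule sum.reindex[unfolded comp_def])
    show "inj_on (insert a) (Pow A)"
      using insert by (intro inj_onI) (metis PowD insert_ident subsetD)
  qed
  also have "sum ?g (Pow A) + (\<Sum>R\<in>Pow A. ?g (insert a R)) =
      (\<Sum>R\<in>Pow A. real (k + ?m + 2) * (fact (k + card R) * fact (?m - card R)))"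
    unfolding sum.distrib[symmetric]
  proof (intro sum.cong refl)
    fix R assume "R \<in> Pow A"
    then have R: "finite R" "a \<notin> R" "card R \<le> ?m"
      using insert finite_subset card_mono by auto
    have "fact (Suc ?m - card R) = real (Suc ?m - card R) * (fact (?m - card R) :: real)"
      using R(3) by (simp add: Suc_diff_le)
    moreover have "fact (k + Suc (card R)) = real (k + Suc (card R)) * (fact (k + card R) :: real)"
      by simp
    moreover have "real (Suc ?m - card R) = real ?m + 1 - real (card R)"
      using R(3) by simp
    moreover have "card (insert a R) = Suc (card R)" using R by simp
    ultimately show "?g R + ?g (insert a R)
        = real (k + ?m + 2) * (fact (k + card R) * fact (?m - card R))"
      unfolding card_insert by (simp only: diff_Suc_Suc) (simp add: algebra_simps)
  qed
  also have "\<dots> = real (k + ?m + 2) * (fact (k + 1 + ?m) / (k + 1))"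
    by (simp add: sum_distrib_left[symmetric] insert.IH)
  also have "\<dots> = fact (k + 1 + card (insert a A)) / (k + 1)"
    unfolding card_insert by (simp add: algebra_simps)
  finally show ?case by simp
qed

lemma sum_Pow_supersets:
  assumes "T \<subseteq> M"
  shows "(\<Sum>S\<in>{S\<in>Pow M. T \<subseteq> S}. f S) = (\<Sum>R\<in>Pow (M - T). f (T \<union> R))"
proof (rule sum.reindex_cong)
  show "inj_on ((\<union>) T) (Pow (M - T))" by (rule inj_onI) blast
  show "{S\<in>Pow M. T \<subseteq> S} = (\<union>) T ` Pow (M - T)"
  proof (intro equalityI subsetI)
    fix S assume "S \<in> {S\<in>Pow M. T \<subseteq> S}"
    then have "S = T \<union> (S - T)" "S - T \<in> Pow (M - T)" by auto
    then show "S \<in> (\<union>) T ` Pow (M - T)" by blast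
  qed (use assms in auto)
qed simp

lemma shapley_unanimity_game:
  assumes N: "finite N" "i \<in> N" and T: "T \<subseteq> N" "T \<noteq> {}"
  shows "shapley i N (unanimity_game T) = (if i \<in> T then 1 / real (card T) else 0)"
proof (cases "i \<in> T")
  case False
  then have "T \<subseteq> S \<union> {i} \<longleftrightarrow> T \<subseteq> S" for S by blast
  then show ?thesis using False by (simp add: shapley_def unanimity_game_def)
next
  case True
  let ?c = "\<lambda>S. fact (card S) * fact (card N - card S - 1) / fact (card N) :: real"
  define A where "A = N - T"
  define T' where "T' = T - {i}"
  have finT: "finite T" using T N finite_subset by blast
  have card_T: "card T = Suc (card T')"
    unfolding T'_def by (rule card.remove[OF finT True])
  have card_N: "card N = card T + card A"
    using card_Diff_subset[OF finT T(1)] card_mono[OF N(1) T(1)] unfolding A_def by simp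
  have A: "N - {i} - T' = A" "T' \<subseteq> N - {i}"
    using T(1) True unfolding A_def T'_def by auto
  have "shapley i N (unanimity_game T) = (\<Sum>S\<in>Pow (N - {i}). if T' \<subseteq> S then ?c S else 0)"
    unfolding shapley_def unanimity_game_def T'_def
    by (intro sum.cong refl) (use True in auto)
  also have "\<dots> = (\<Sum>S\<in>{S\<in>Pow (N - {i}). T' \<subseteq> S}. ?c S)"
    using N by (simp add: sum.inter_filter[symmetric])
  also have "\<dots> = (\<Sum>R\<in>Pow A. ?c (T' \<union> R))"
    using sum_Pow_supersets[OF A(2)] by (simp only: A(1))
  also have "\<dots> = (\<Sum>R\<in>Pow A. fact (card T' + card R) * fact (card A - card R)) / fact (card N)"
    unfolding sum_divide_distrib
  proof (intro sum.cong refl)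
    fix R assume R: "R \<in> Pow A"
    have finA: "finite A" using N(1) by (simp add: A_def)
    then have "finite R" "card R \<le> card A" "T' \<inter> R = {}"
      using R finite_subset card_mono by (auto simp: A_def T'_def)
    then have "card (T' \<union> R) = card T' + card R"
      using finT by (simp add: card_Un_disjoint T'_def)
    then show "?c (T' \<union> R) = fact (card T' + card R) * fact (card A - card R) / fact (card N)"
      by (simp add: card_N card_T)
  qed
  also have "\<dots> = 1 / real (card T)"
    using N by (simp add: sum_Pow_fact_mult_fact A_def card_N card_T)
  finally show ?thesis using True by simp
qed

section \<open>The Myerson value of the distance-polynomial game\<close>

lemma doubleton_ends:
  assumes "p \<noteq> q"
  shows "(fst_end {p, q}, snd_end {p, q}) \<in> {(p, q), (q, p)}"
proof -
  have "fst_end {p, q} \<in> {p, q}"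
    unfolding fst_end_def by (rule someI[of _ p]) simp
  moreover have "\<exists>x. x \<in> {p, q} \<and> x \<noteq> fst_end {p, q}"
    using assms by (cases "fst_end {p, q} = p") auto
  then have "snd_end {p, q} \<in> {p, q} \<and> snd_end {p, q} \<noteq> fst_end {p, q}"
    unfolding snd_end_def by (rule someI_ex)
  ultimately show ?thesis by auto
qed

lemma sum_offdiag_symmetric:
  fixes f :: "'a \<Rightarrow> 'a \<Rightarrow> 'b::comm_semiring_1"
  assumes "finite V" and P: "\<And>p q. P p q \<Longrightarrow> P q p" and f: "\<And>p q. f q p = f p q"
  shows "(\<Sum>(p, q)\<in>{(p, q)\<in>V \<times> V - Id. P p q}. f p q)
      = (\<Sum>e\<in>{{p, q} |p q. p \<in> V \<and> q \<in> V \<and> p \<noteq> q \<and> P p q}. 2 * f (fst_end e) (snd_end e))"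
proof -
  let ?X = "{(p, q)\<in>V \<times> V - Id. P p q}"
  let ?e = "\<lambda>(p, q). {p, q}"
  have "finite ?X" using assms(1) by (auto intro: finite_subset[of _ "V \<times> V"])
  then have "(\<Sum>(p, q)\<in>?X. f p q) = (\<Sum>e\<in>?e ` ?X. \<Sum>(p, q)\<in>{x\<in>?X. ?e x = e}. f p q)"
    by (rule sum.image_gen)
  also have "?e ` ?X = {{p, q} |p q. p \<in> V \<and> q \<in> V \<and> p \<noteq> q \<and> P p q}"
    by auto
  also have "(\<Sum>e\<in>\<dots>. \<Sum>(p, q)\<in>{x\<in>?X. ?e x = e}. f p q)
      = (\<Sum>e\<in>{{p, q} |p q. p \<in> V \<and> q \<in> V \<and> p \<noteq> q \<and> P p q}. 2 * f (fst_end e) (snd_end e))"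
  proof (rule sum.cong[OF refl])
    fix e assume "e \<in> {{p, q} |p q. p \<in> V \<and> q \<in> V \<and> p \<noteq> q \<and> P p q}"
    then obtain p q where e: "e = {p, q}" "p \<in> V" "q \<in> V" "p \<noteq> q" "P p q" by blast
    then have "{x\<in>?X. ?e x = e} = {(p, q), (q, p)}"
      using P by (auto simp: doubleton_eq_iff)
    then show "(\<Sum>(p, q)\<in>{x\<in>?X. ?e x = e}. f p q) = 2 * f (fst_end e) (snd_end e)"
      using doubleton_ends[OF e(4)] f e(1,4) by (auto simp: mult_2)
  qed
  finally show ?thesis .
qed

lemma shapley_restricted_worth_tree:
  assumes T: "is_tree V E" and i: "i \<in> V"
  shows "shapley i V (restricted_worth (dp_worth \<delta> E) E)
      = (\<Sum>(p, q)\<in>{(p, q)\<in>V \<times> V - Id. on_path V E p q i}.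
           \<delta> ^ the_enat (gdist E V p q) / (real (the_enat (gdist E V p q)) + 1))"
proof -
  have fin: "finite V" using T by (rule is_tree_finite)
  define w where "w x = dpow \<delta> (gdist E V (fst x) (snd x))" for x
  define U where "U x = unanimity_game (set (tree_path V E (fst x) (snd x)))" for x
  have "shapley i V (restricted_worth (dp_worth \<delta> E) E)
      = shapley i V (\<lambda>C. \<Sum>x\<in>V \<times> V - Id. w x * U x C)"
    using restricted_worth_tree[OF T]
    by (intro shapley_cong[OF i]) (simp add: w_def U_def case_prod_unfold)
  also have "\<dots> = (\<Sum>x\<in>V \<times> V - Id. w x * shapley i V (U x))"
    by (rule shapley_sum)
  also have "\<dots> = (\<Sum>(p, q)\<in>V \<times> V - Id. if on_path V E p q i
      then \<delta> ^ the_enat (gdist E V p q) / (real (the_enat (gdist E V p q)) + 1) else 0)"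
  proof (rule sum.cong[OF refl])
    fix x assume "x \<in> V \<times> V - Id"
    then obtain p q where x: "x = (p, q)" "p \<in> V" "q \<in> V" by auto
    let ?t = "tree_path V E p q"
    have "path_in E V p q ?t" by (rule path_in_tree_path[OF T x(2,3)])
    then have "set ?t \<subseteq> V" "set ?t \<noteq> {}" "card (set ?t) = length (?t)"
      by (auto simp: path_in_def walk_in_def distinct_card)
    moreover have "gdist E V p q = enat (card (set ?t) - 1)" "card (set ?t) \<ge> 1"
      using gdist_tree_eq_length[OF T x(2,3)] \<open>card (set ?t) = length ?t\<close> \<open>set ?t \<noteq> {}\<close>
      by (simp_all add: Suc_le_eq card_gt_0_iff)
    ultimately show "w x * shapley i V (U x) = (case x of (p, q) \<Rightarrow> if on_path V E p q i
        then \<delta> ^ the_enat (gdist E V p q) / (real (the_enat (gdist E V p q)) + 1) else 0)"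
      using shapley_unanimity_game[OF fin i] on_path_iff_tree_path[OF T x(2,3)]
      by (simp add: x w_def U_def dpow_def)
  qed
  also have "\<dots> = (\<Sum>(p, q)\<in>{(p, q)\<in>V \<times> V - Id. on_path V E p q i}.
      \<delta> ^ the_enat (gdist E V p q) / (real (the_enat (gdist E V p q)) + 1))"
    using fin by (intro sum.mono_neutral_cong_right) (auto split: if_splits)
  finally show ?thesis .
qed

theorem mainTheorem3:
  fixes V :: "'a set" and E :: "'a set set" and \<delta> :: real and i :: 'a
  assumes "is_tree V E"
    and "0 < \<delta>" and "\<delta> < 1"
    and "i \<in> V"
  shows "shapley i V (restricted_worth (dp_worth \<delta> E) E) =
    (\<Sum>e\<in>{{p, q} | p q. p \<in> V \<and> q \<in> V \<and> p \<noteq> q \<and> on_path V E p q i}.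
        2 * \<delta> ^ the_enat (gdist E V (fst_end e) (snd_end e))
          / (real (the_enat (gdist E V (fst_end e) (snd_end e))) + 1))"
proof -
  have "finite V" using assms(1) by (rule is_tree_finite)
  have "shapley i V (restricted_worth (dp_worth \<delta> E) E)
      = (\<Sum>(p, q)\<in>{(p, q)\<in>V \<times> V - Id. on_path V E p q i}.
           \<delta> ^ the_enat (gdist E V p q) / (real (the_enat (gdist E V p q)) + 1))"
    by (rule shapley_restricted_worth_tree[OF assms(1,4)])
  also have "\<dots> = (\<Sum>e\<in>{{p, q} | p q. p \<in> V \<and> q \<in> V \<and> p \<noteq> q \<and> on_path V E p q i}.
      2 * (\<delta> ^ the_enat (gdist E V (fst_end e) (snd_end e))
          / (real (the_enat (gdist E V (fst_end e) (snd_end e))) + 1)))"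
    by (rule sum_offdiag_symmetric[OF \<open>finite V\<close>]) (simp_all add: on_path_commute gdist_commute)
  finally show ?thesis by simp
qed

end
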